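(* Under Total Store Order, in the limit $m\to\infty$, $\Pr[B_0]=2/3$, and for every integer $\gamma>0$, $$\Pr[B_\gamma]=\tfrac{6}{7}\cdot 4^{-\gamma}+R(\gamma)\cdot 2^{-\gamma}$$ for some number $R(\gamma)$ with $0\le R(\gamma)\le \tfrac{2}{21}$.
   Context: Fix $m\ge 1$. A random program is a sequence $x_1,\dots,x_{m+2}$ of memory operations, each with a type in $\{\mathrm{LD},\mathrm{ST}\}$: $x_1,\dots,x_m$ have i.i.d. types, each $\mathrm{ST}$ with probability $1/2$ and $\mathrm{LD}$ with probability $1/2$; $x_{m+1}$ (the critical load) has type $\mathrm{LD}$ and $x_{m+2}$ (the critical store) has type $\mathrm{ST}$. The initial order is $S_0=(x_1,\dots,x_{m+2})$. A memory model is specified by the set of ordered type pairs $(\tau_1,\tau_2)$ for which an instruction of type $\tau_2$ may be moved ahead of an immediately preceding instruction of type $\tau_1$: Sequential Consistency (SC) allows no pair; Total Store Order (TSO) allows only the pair $(\mathrm{ST},\mathrm{LD})$ (a load may move ahead of a preceding store); Weak Ordering (WO) allows all four pairs. The settling process runs rounds $r=1,\dots,m+2$. Before round $r$, the current order $S_{r-1}$ consists of $x_1,\dots,x_{r-1}$ in some order in positions $1,\dots,r-1$, followed by $x_r,\dots,x_{m+2}$ in positions $r,\dots,m+2$. In round $r$, instruction $x_r$ (starting at position $r$) repeatedly attempts to swap with the instruction immediately preceding it in the current order: the attempt fails automatically if the pair (type of the preceding instruction, type of $x_r$) is not allowed by the memory model, or if $x_r$ is the critical store and the preceding instruction is the critical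 load; otherwise the attempt succeeds independently with probability $1/2$. The round ends when an attempt fails or $x_r$ reaches position $1$; the resulting order is $S_r$. The final order is $S_{m+2}$. For $\gamma\ge 0$, $B_\gamma$ is the event that in $S_{m+2}$ exactly $\gamma$ instructions lie strictly between the critical load and the critical store. *)

theory Defs
  imports "HOL-Probability.Probability"
begin

datatype optype = LD | ST

text \<open>A memory model: the set of ordered type pairs (type of preceding instruction,
  type of moving instruction) for which the moving instruction may pass.\<close>
definition SC_model :: "(optype \<times> optype) set" where "SC_model = {}"
definition TSO_model :: "(optype \<times> optype) set" where "TSO_model = {(ST, LD)}"
definition WO_model :: "(optype \<times> optype) set" where "WO_model = UNIV"

text \<open>Instructions are numbered 0..m+1 (0-based: x_(i+1) is instruction i).
  tys !! i is the type of instruction i; the critical load is instruction m,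
  the critical store is instruction m+1.\<close>

definition fair_coin :: "bool pmf" where "fair_coin = bernoulli_pmf (1/2)"

fun rand_types :: "nat \<Rightarrow> optype list pmf" where
  "rand_types 0 = return_pmf []"
| "rand_types (Suc n) = bind_pmf fair_coin (\<lambda>b.
      map_pmf (\<lambda>l. (if b then ST else LD) # l) (rand_types n))"

text \<open>One round: instruction x moves backwards through the already-settled prefix.
  The prefix is stored REVERSED (head = instruction immediately preceding x);
  the result is the reversed new prefix including x.\<close>
fun sink :: "(optype \<times> optype) set \<Rightarrow> optype list \<Rightarrow> nat \<Rightarrow> nat \<Rightarrow> nat \<Rightarrow> nat list \<Rightarrow> nat list pmf" where
  "sink M tys cl cs x [] = return_pmf [x]"
| "sink M tys cl cs x (y # ys) =
     (if (tys ! y, tys ! x) \<in> M \<and> \<not> (x = cs \<and> y = cl)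
      then bind_pmf fair_coin (\<lambda>b. if b then map_pmf ((#) y) (sink M tys cl cs x ys)
                                   else return_pmf (x # y # ys))
      else return_pmf (x # y # ys))"

text \<open>State (reversed order of the first n instructions) after rounds 1..n.\<close>
fun rounds :: "(optype \<times> optype) set \<Rightarrow> optype list \<Rightarrow> nat \<Rightarrow> nat \<Rightarrow> nat \<Rightarrow> nat list pmf" where
  "rounds M tys cl cs 0 = return_pmf []"
| "rounds M tys cl cs (Suc n) = bind_pmf (rounds M tys cl cs n) (sink M tys cl cs n)"

definition final_order :: "(optype \<times> optype) set \<Rightarrow> nat \<Rightarrow> nat list pmf" where
  "final_order M m = bind_pmf (rand_types m) (\<lambda>bs.
      map_pmf rev (rounds M (bs @ [LD, ST]) m (Suc m) (m + 2)))"

definition pos :: "nat list \<Rightarrow> nat \<Rightarrow> nat" where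
  "pos xs a = length (takeWhile (\<lambda>z. z \<noteq> a) xs)"

definition gap :: "nat \<Rightarrow> nat list \<Rightarrow> nat" where
  "gap m xs = (let i = pos xs m; j = pos xs (Suc m) in max i j - min i j - 1)"

definition PrB :: "(optype \<times> optype) set \<Rightarrow> nat \<Rightarrow> nat \<Rightarrow> real" where
  "PrB M m \<gamma> = measure_pmf.prob (final_order M m) {xs. gap m xs = \<gamma>}"

end

theory Submission
  imports Defs
begin

(* Under TSO a store never moves and a load moves back only across stores.
   Hence when instruction x is settled into the (reversed) settled prefix,
   a store stays in place, while a load is inserted behind k of the stores
   immediately preceding it, where k is a geometric variable truncated at the
   length t of that trailing run of stores ("trunc_geom t").  The length of the
   trailing store run is therefore a Markov chain ("store_chain"): a store
   extends it by one, a load resets it to the truncated geometric value.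
   The critical load is such a load, and the critical store behind it does not
   move, so the gap is trunc_geom applied to the chain after m steps.

   The limit of Pr[B_g] is
   4^-g * (tail_factor g - tail_factor (g+1)/4), and elementary bounds on
   tail_factor give the decomposition 6/7 * 4^-g + R * 2^-g with
   0 <= R <= 2/21 for g > 0, and the value 2/3 for g = 0. *)

(* Number of successes of fair coin flips before the first failure, capped at t:
   the distance a load travels across a run of t stores. *)
fun trunc_geom :: "nat \<Rightarrow> nat pmf" where
  "trunc_geom 0 = return_pmf 0"
| "trunc_geom (Suc t) =
     bind_pmf fair_coin (\<lambda>b. if b then map_pmf Suc (trunc_geom t) else return_pmf 0)"

lemma trunc_geom_le: "k \<in> set_pmf (trunc_geom t) \<Longrightarrow> k \<le> t"
  by (induction t arbitrary: k) (auto simp: fair_coin_def split: if_splits)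

(* Length of the run of stores at the head of a reversed settled prefix, i.e.
   immediately preceding the next instruction to be settled. *)
definition store_run :: "optype list \<Rightarrow> nat list \<Rightarrow> nat" where
  "store_run tys ys = length (takeWhile (\<lambda>y. tys ! y = ST) ys)"

(* Under TSO a store cannot pass anything, so it stays where it is. *)
lemma sink_store:
  "tys ! x = ST \<Longrightarrow> sink TSO_model tys cl cs x ys = return_pmf (x # ys)"
  by (cases ys) (auto simp: TSO_model_def)

lemma sink_load:
  assumes "tys ! x = LD" "x \<noteq> cs"
  shows "sink TSO_model tys cl cs x ys =
           map_pmf (\<lambda>k. take k ys @ x # drop k ys) (trunc_geom (store_run tys ys))"
proof (induction ys)
  case Nil
  then show ?case by (simp add: store_run_def)
next
  case (Cons y ys)
  show ?case
  proof (cases "tys ! y")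
    case LD
    then show ?thesis using assms by (simp add: store_run_def TSO_model_def)
  next
    case ST
    have "store_run tys (y # ys) = Suc (store_run tys ys)"
      using ST by (simp add: store_run_def)
    then show ?thesis using ST assms Cons
      by (simp add: TSO_model_def map_bind_pmf map_pmf_comp if_distrib cong: if_cong)
  qed
qed

lemma store_run_le_length: "store_run tys ys \<le> length ys"
  unfolding store_run_def by (rule length_takeWhile_le)

(* After a load has passed k stores of the run, exactly those k stores
   precede it, so the new store run has length k. *)
lemma store_run_insert_load:
  assumes "tys ! x = LD" "k \<le> store_run tys ys"
  shows "store_run tys (take k ys @ x # drop k ys) = k"
proof -
  have stores: "\<forall>y\<in>set (take k ys). tys ! y = ST"
    using assms(2) unfolding store_run_def
    by (metis (mono_tags, lifting) set_takeWhileD set_take_subset_set_take subset_code(1)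
        takeWhile_eq_take)
  have "length (take k ys) = k"
    using assms(2) store_run_le_length[of tys ys] by simp
  then show ?thesis
    using stores assms(1) by (simp add: store_run_def takeWhile_append2)
qed

definition run_step :: "bool \<Rightarrow> nat \<Rightarrow> nat pmf" where
  "run_step is_store t = (if is_store then return_pmf (Suc t) else trunc_geom t)"

lemma store_run_sink:
  assumes "x \<noteq> cs"
  shows "map_pmf (store_run tys) (sink TSO_model tys cl cs x ys) =
           run_step (tys ! x = ST) (store_run tys ys)"
proof (cases "tys ! x")
  case LD
  have "map_pmf (store_run tys) (sink TSO_model tys cl cs x ys) =
          map_pmf id (trunc_geom (store_run tys ys))"
    unfolding sink_load[OF LD assms] map_pmf_comp
    by (intro map_pmf_cong refl) (simp add: store_run_insert_load[OF LD] trunc_geom_le)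
  then show ?thesis using LD by (simp add: run_step_def)
next
  case ST
  then show ?thesis by (simp add: sink_store run_step_def store_run_def)
qed

fun store_chain :: "nat \<Rightarrow> nat pmf" where
  "store_chain 0 = return_pmf 0"
| "store_chain (Suc n) = bind_pmf (store_chain n) (\<lambda>t. bind_pmf fair_coin (\<lambda>b. run_step b t))"

lemma rand_types_length: "bs \<in> set_pmf (rand_types n) \<Longrightarrow> length bs = n"
  by (induction n arbitrary: bs) (auto simp: fair_coin_def)

(* The i.i.d. types may equally be generated by appending one fresh type at
   the end; this matches the round-by-round order of the settling process. *)
lemma rand_types_snoc:
  "rand_types (Suc n) =
     bind_pmf (rand_types n) (\<lambda>l. map_pmf (\<lambda>b. l @ [if b then ST else LD]) fair_coin)"
proof (induction n)
  case 0
  then show ?case by (simp add: map_pmf_def bind_return_pmf bind_return_pmf')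
next
  case (Suc n)
  define ty :: "bool \<Rightarrow> optype" where "ty b = (if b then ST else LD)" for b
  have "rand_types (Suc (Suc n)) =
      bind_pmf fair_coin (\<lambda>b. bind_pmf (rand_types n) (\<lambda>l.
        map_pmf (\<lambda>c. (ty b # l) @ [ty c]) fair_coin))"
    by (subst rand_types.simps, subst Suc) (simp add: ty_def map_bind_pmf map_pmf_comp)
  also have "\<dots> = bind_pmf fair_coin (\<lambda>b. bind_pmf fair_coin (\<lambda>c.
        map_pmf (\<lambda>l. (ty b # l) @ [ty c]) (rand_types n)))"
    unfolding map_pmf_def by (subst bind_commute_pmf) (rule refl)
  also have "\<dots> = bind_pmf (rand_types (Suc n)) (\<lambda>l. map_pmf (\<lambda>c. l @ [ty c]) fair_coin)"
    by (simp add: ty_def bind_map_pmf map_pmf_def bind_assoc_pmf bind_return_pmf)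
       (rule bind_pmf_cong[OF refl], rule bind_commute_pmf[symmetric])
  finally show ?case by (simp add: ty_def)
qed

lemma store_run_rounds:
  assumes "n \<le> cs"
  shows "bind_pmf (rand_types n) (\<lambda>bs.
           map_pmf (store_run (bs @ sfx)) (rounds TSO_model (bs @ sfx) cl cs n)) = store_chain n"
  using assms
proof (induction n arbitrary: sfx)
  case 0
  then show ?case by (simp add: store_run_def)
next
  case (Suc n)
  define ty :: "bool \<Rightarrow> optype" where "ty b = (if b then ST else LD)" for b
  define R where "R l b = rounds TSO_model (l @ ty b # sfx) cl cs n" for l b
  have "bind_pmf (rand_types (Suc n)) (\<lambda>bs.
          map_pmf (store_run (bs @ sfx)) (rounds TSO_model (bs @ sfx) cl cs (Suc n)))
    = bind_pmf (rand_types n) (\<lambda>l. bind_pmf fair_coin (\<lambda>b.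
        map_pmf (store_run (l @ ty b # sfx)) (bind_pmf (R l b) (sink TSO_model (l @ ty b # sfx) cl cs n))))"
    unfolding rand_types_snoc R_def by (simp add: bind_map_pmf bind_assoc_pmf ty_def)
  also have "\<dots> = bind_pmf (rand_types n) (\<lambda>l. bind_pmf fair_coin (\<lambda>b.
        bind_pmf (map_pmf (store_run (l @ ty b # sfx)) (R l b)) (run_step b)))"
  proof (intro bind_pmf_cong refl)
    fix l b assume "l \<in> set_pmf (rand_types n)"
    then have "(l @ ty b # sfx) ! n = ty b" by (simp add: rand_types_length nth_append)
    then have "((l @ ty b # sfx) ! n = ST) = b" by (simp add: ty_def)
    then show "map_pmf (store_run (l @ ty b # sfx)) (bind_pmf (R l b) (sink TSO_model (l @ ty b # sfx) cl cs n))
      = bind_pmf (map_pmf (store_run (l @ ty b # sfx)) (R l b)) (run_step b)"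
      using Suc.prems by (simp add: map_bind_pmf bind_map_pmf store_run_sink)
  qed
  also have "\<dots> = bind_pmf fair_coin (\<lambda>b. bind_pmf (rand_types n) (\<lambda>l.
        bind_pmf (map_pmf (store_run (l @ ty b # sfx)) (R l b)) (run_step b)))"
    by (rule bind_commute_pmf)
  also have "\<dots> = bind_pmf fair_coin (\<lambda>b. bind_pmf (store_chain n) (run_step b))"
    using Suc by (simp add: R_def bind_assoc_pmf[symmetric])
  also have "\<dots> = store_chain (Suc n)"
    by (simp add: bind_commute_pmf[of fair_coin])
  finally show ?case .
qed

lemma set_sink: "L \<in> set_pmf (sink M tys cl cs x ys) \<Longrightarrow> set L = insert x (set ys)"
  by (induction ys arbitrary: L) (auto simp: fair_coin_def split: if_splits)

lemma set_rounds: "L \<in> set_pmf (rounds M tys cl cs n) \<Longrightarrow> set L = {..<n}"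
  by (induction n arbitrary: L) (auto dest!: set_sink simp: lessThan_Suc)

lemma pos_append_first: "a \<notin> set xs \<Longrightarrow> pos (xs @ a # zs) a = length xs"
  unfolding pos_def by (subst takeWhile_append2) auto

lemma gap_after_load_insertion:
  assumes "m \<notin> set ys" "Suc m \<notin> set ys" "k \<le> length ys"
  shows "gap m (rev (Suc m # take k ys @ m # drop k ys)) = k"
proof -
  define before after where "before = rev (drop k ys)" and "after = rev (take k ys)"
  have "rev (Suc m # take k ys @ m # drop k ys) = before @ m # after @ [Suc m]"
    by (simp add: before_def after_def)
  moreover have "m \<notin> set before" "Suc m \<notin> set (before @ m # after)"
    using assms(1,2) by (auto simp: before_def after_def dest: in_set_dropD in_set_takeD)
  ultimately have "pos (rev (Suc m # take k ys @ m # drop k ys)) m = length ys - k"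
    and "pos (rev (Suc m # take k ys @ m # drop k ys)) (Suc m) = Suc (length ys)"
    using pos_append_first[of m before] pos_append_first[of "Suc m" "before @ m # after" "[]"]
      assms(3) by (simp_all add: before_def after_def)
  then show ?thesis using assms(3) by (simp add: gap_def)
qed

lemma gap_critical_rounds:
  assumes load: "tys ! m = LD" and store: "tys ! Suc m = ST" and settled: "set ys = {..<m}"
  shows "bind_pmf (sink TSO_model tys m (Suc m) m ys)
           (\<lambda>L. map_pmf (\<lambda>L. gap m (rev L)) (sink TSO_model tys m (Suc m) (Suc m) L)) =
         trunc_geom (store_run tys ys)"
proof -
  have "map_pmf (\<lambda>k. gap m (rev (Suc m # take k ys @ m # drop k ys)))
          (trunc_geom (store_run tys ys)) = trunc_geom (store_run tys ys)"
    using settled trunc_geom_le store_run_le_length[of tys ys]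
    by (intro map_pmf_idI gap_after_load_insertion) (auto intro: order_trans)
  then show ?thesis
    by (simp add: sink_load[OF load] sink_store[OF store] map_pmf_def[symmetric] map_pmf_comp)
qed

lemma gap_final_order:
  "map_pmf (gap m) (final_order TSO_model m) = bind_pmf (store_chain m) trunc_geom"
proof -
  have "map_pmf (gap m) (final_order TSO_model m) =
        bind_pmf (rand_types m) (\<lambda>bs. bind_pmf
          (map_pmf (store_run (bs @ [LD, ST])) (rounds TSO_model (bs @ [LD, ST]) m (Suc m) m))
          trunc_geom)"
    unfolding final_order_def map_bind_pmf
  proof (intro bind_pmf_cong refl)
    fix bs assume "bs \<in> set_pmf (rand_types m)"
    then have "length bs = m" by (rule rand_types_length)
    define tys where "tys = bs @ [LD, ST]"
    have load: "tys ! m = LD" and store: "tys ! Suc m = ST"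
      using \<open>length bs = m\<close> by (simp_all add: tys_def nth_append)
    have "map_pmf (gap m) (map_pmf rev (rounds TSO_model tys m (Suc m) (Suc (Suc m)))) =
          bind_pmf (rounds TSO_model tys m (Suc m) m) (\<lambda>ys. trunc_geom (store_run tys ys))"
      unfolding rounds.simps bind_assoc_pmf map_bind_pmf map_pmf_comp
      by (intro bind_pmf_cong refl gap_critical_rounds[OF load store] set_rounds)
    then show "map_pmf (gap m) (map_pmf rev (rounds TSO_model (bs @ [LD, ST]) m (Suc m) (m + 2))) =
      bind_pmf (map_pmf (store_run (bs @ [LD, ST])) (rounds TSO_model (bs @ [LD, ST]) m (Suc m) m))
        trunc_geom"
      by (simp add: tys_def bind_map_pmf numeral_2_eq_2)
  qed
  also have "\<dots> = bind_pmf (store_chain m) trunc_geom"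
    by (simp add: bind_assoc_pmf[symmetric] store_run_rounds)
  finally show ?thesis .
qed

lemma prob_bind_pmf:
  "measure_pmf.prob (bind_pmf M f) A = (\<integral>x. measure_pmf.prob (f x) A \<partial>M)"
proof -
  have int: "integrable (measure_pmf M) (\<lambda>x. measure_pmf.prob (f x) A)"
    by (rule measure_pmf.integrable_const_bound[where B=1]) auto
  have "ennreal (measure_pmf.prob (bind_pmf M f) A) = (\<integral>\<^sup>+x. emeasure (f x) A \<partial>M)"
    by (simp add: measure_pmf.emeasure_eq_measure[symmetric])
  also have "\<dots> = ennreal (\<integral>x. measure_pmf.prob (f x) A \<partial>M)"
    by (simp add: measure_pmf.emeasure_eq_measure nn_integral_eq_integral[OF int])
  finally show ?thesis by (simp add: integral_nonneg_AE)
qed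

lemma prob_fair_coin_bind:
  "measure_pmf.prob (bind_pmf fair_coin f) A =
     (measure_pmf.prob (f True) A + measure_pmf.prob (f False) A) / 2"
  by (simp add: prob_bind_pmf fair_coin_def)

lemma integral_indicator_combination:
  "(\<integral>t. a * indicator A t + b * indicator B t \<partial>measure_pmf M) =
     a * measure_pmf.prob M A + b * measure_pmf.prob M B"
proof -
  have "integrable (measure_pmf M) (\<lambda>t. c * indicator C t :: real)" for c C
    by (rule measure_pmf.integrable_const_bound[where B="\<bar>c\<bar>"]) (auto simp: indicator_def)
  then show ?thesis by (simp add: Bochner_Integration.integral_add)
qed

lemma trunc_geom_tail:
  "measure_pmf.prob (trunc_geom t) {x. k \<le> x} = (if k \<le> t then (1/2)^k else 0)"
proof (induction t arbitrary: k)
  case 0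
  then show ?case by (simp add: indicator_def)
next
  case (Suc t)
  show ?case
  proof (cases k)
    case 0
    then show ?thesis by simp
  next
    case (Suc k')
    have "Suc -` {x. Suc k' \<le> x} = {x. k' \<le> x}" by auto
    then show ?thesis using Suc.IH[of k'] Suc by (simp add: prob_fair_coin_bind indicator_def)
  qed
qed

definition run_tail :: "nat \<Rightarrow> nat \<Rightarrow> real" where
  "run_tail n j = measure_pmf.prob (store_chain n) {t. j \<le> t}"

lemma run_tail_0: "run_tail n 0 = 1"
  by (simp add: run_tail_def)

(* Recursion for the tails: after a store the run is >= j+1 iff it was >= j;
   after a load it is >= j+1 with probability 2^-(j+1), provided it was. *)
lemma run_tail_Suc:
  "run_tail (Suc n) (Suc j) = run_tail n j / 2 + (1/2)^(j+2) * run_tail n (Suc j)"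
proof -
  have "run_tail (Suc n) (Suc j) =
        (\<integral>t. (1/2) * indicator {t. j \<le> t} t + (1/2)^(j+2) * indicator {t. Suc j \<le> t} t
           \<partial>store_chain n)"
    unfolding run_tail_def store_chain.simps prob_bind_pmf[of "store_chain n"]
    by (intro Bochner_Integration.integral_cong refl)
       (simp add: prob_fair_coin_bind run_step_def trunc_geom_tail indicator_def)
  also have "\<dots> = run_tail n j / 2 + (1/2)^(j+2) * run_tail n (Suc j)"
    unfolding integral_indicator_combination run_tail_def by simp
  finally show ?thesis .
qed

lemma PrB_TSO_eq:
  "PrB TSO_model m g = (1/2)^g * run_tail m g - (1/2)^(Suc g) * run_tail m (Suc g)"
proof -
  define G where "G = bind_pmf (store_chain m) trunc_geom"
  have tail: "measure_pmf.prob G {x. k \<le> x} = (1/2)^k * run_tail m k" for k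
  proof -
    have "measure_pmf.prob G {x. k \<le> x} =
          (\<integral>t. (1/2)^k * indicator {t. k \<le> t} t + 0 * indicator {} t \<partial>store_chain m)"
      unfolding G_def prob_bind_pmf trunc_geom_tail
      by (intro Bochner_Integration.integral_cong refl) (simp add: indicator_def)
    then show ?thesis by (simp add: integral_indicator_combination run_tail_def)
  qed
  have "PrB TSO_model m g = measure_pmf.prob (map_pmf (gap m) (final_order TSO_model m)) {g}"
    by (simp add: PrB_def vimage_def)
  also have "{g} = {x. g \<le> x} - {x. Suc g \<le> x}" by auto
  finally have "PrB TSO_model m g = measure_pmf.prob G ({x. g \<le> x} - {x. Suc g \<le> x})"
    by (simp only: G_def gap_final_order)
  also have "\<dots> = measure_pmf.prob G {x. g \<le> x} - measure_pmf.prob G {x. Suc g \<le> x}"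
    by (rule measure_pmf.finite_measure_Diff) auto
  finally show ?thesis by (simp add: tail)
qed

lemma perturbed_contraction_null:
  fixes E d :: "nat \<Rightarrow> real"
  assumes a: "0 \<le> a" "a < 1" and d: "d \<longlonglongrightarrow> 0" and E_nonneg: "\<And>n. 0 \<le> E n"
    and step: "\<And>n. E (Suc n) \<le> a * E n + d n"
  shows "E \<longlonglongrightarrow> 0"
proof (rule LIMSEQ_I)
  fix r :: real assume r: "0 < r"
  define \<delta> where "\<delta> = r * (1 - a) / 2"
  have "0 < \<delta>" using r a by (simp add: \<delta>_def)
  then obtain N where N: "\<And>n. n \<ge> N \<Longrightarrow> norm (d n) < \<delta>"
    using LIMSEQ_D[OF d] by auto
  have bound: "E (N + k) \<le> a ^ k * E N + r / 2" for k
  proof (induction k)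
    case 0
    then show ?case using r by simp
  next
    case (Suc k)
    have "E (N + Suc k) \<le> a * E (N + k) + d (N + k)" using step[of "N + k"] by simp
    also have "\<dots> \<le> a * (a ^ k * E N + r / 2) + \<delta>"
      using N[of "N + k"] Suc.IH a by (intro add_mono mult_left_mono) auto
    also have "\<dots> = a ^ Suc k * E N + r / 2" by (simp add: \<delta>_def field_simps)
    finally show ?case .
  qed
  have "(\<lambda>k. a ^ k * E N) \<longlonglongrightarrow> 0 * E N"
    using a by (intro tendsto_mult tendsto_const LIMSEQ_power_zero) auto
  then obtain K where K: "\<And>k. k \<ge> K \<Longrightarrow> norm (a ^ k * E N) < r / 2"
    using LIMSEQ_D[of _ 0 "r/2"] r by fastforce
  show "\<exists>n0. \<forall>n\<ge>n0. norm (E n - 0) < r"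
  proof (intro exI allI impI)
    fix n assume "n \<ge> N + K"
    then have "E n \<le> a ^ (n - N) * E N + r / 2" and "norm (a ^ (n - N) * E N) < r / 2"
      using bound[of "n - N"] K[of "n - N"] by simp_all
    then show "norm (E n - 0) < r" using E_nonneg[of n] by simp
  qed
qed

lemma affine_recursion_limit:
  fixes x b :: "nat \<Rightarrow> real"
  assumes a: "0 \<le> a" "a < 1" and b: "b \<longlonglongrightarrow> c"
    and rec: "\<And>n. x (Suc n) = a * x n + b n"
  shows "x \<longlonglongrightarrow> c / (1 - a)"
proof -
  define l where "l = c / (1 - a)"
  have fixpoint: "l = a * l + c" using a by (simp add: l_def field_simps)
  have "(\<lambda>n. \<bar>x n - l\<bar>) \<longlonglongrightarrow> 0"
  proof (rule perturbed_contraction_null[OF a])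
    show "(\<lambda>n. \<bar>b n - c\<bar>) \<longlonglongrightarrow> 0"
      using b by (simp add: tendsto_rabs_zero LIM_zero)
  next
    fix n
    have "\<bar>x (Suc n) - l\<bar> = \<bar>a * (x n - l) + (b n - c)\<bar>"
      by (subst rec, subst fixpoint) (simp add: algebra_simps)
    also have "\<dots> \<le> a * \<bar>x n - l\<bar> + \<bar>b n - c\<bar>"
      using a abs_triangle_ineq[of "a * (x n - l)"] by (simp add: abs_mult)
    finally show "\<bar>x (Suc n) - l\<bar> \<le> a * \<bar>x n - l\<bar> + \<bar>b n - c\<bar>" .
  qed auto
  then show ?thesis unfolding l_def[symmetric] by (simp add: tendsto_rabs_zero_iff LIM_zero_iff)
qed

(* tail_factor j = prod_{i=2..j+1} 1/(1 - 2^-i); the limit of run_tail n j is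
   2^-j * tail_factor j. *)
fun tail_factor :: "nat \<Rightarrow> real" where
  "tail_factor 0 = 1"
| "tail_factor (Suc j) = tail_factor j / (1 - (1/2)^(j+2))"

(* 2^-(j+1) <= 1/2, used to keep the denominators 1 - 2^-(j+2) positive. *)
lemma half_pow_Suc_le: "(1/2::real)^(Suc j) \<le> 1/2"
  using power_le_one[of "1/2::real" j] by simp

lemma run_tail_limit: "(\<lambda>n. run_tail n j) \<longlonglongrightarrow> (1/2)^j * tail_factor j"
proof (induction j)
  case 0
  then show ?case by (simp add: run_tail_0)
next
  case (Suc j)
  have a: "0 \<le> (1/2::real)^(j+2)" "(1/2::real)^(j+2) < 1"
    using half_pow_Suc_le[of "Suc j"] by simp_all
  have "(\<lambda>n. run_tail n j / 2) \<longlonglongrightarrow> (1/2)^j * tail_factor j / 2"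
    using Suc.IH by (intro tendsto_divide tendsto_const) auto
  then have "(\<lambda>n. run_tail n (Suc j)) \<longlonglongrightarrow> ((1/2)^j * tail_factor j / 2) / (1 - (1/2)^(j+2))"
    by (rule affine_recursion_limit[OF a]) (simp add: run_tail_Suc)
  moreover have "((1/2)^j * tail_factor j / 2) / (1 - (1/2)^(j+2)) = (1/2)^(Suc j) * tail_factor (Suc j)"
    by simp
  ultimately show ?case by simp
qed

lemma tail_factor_pos: "0 < tail_factor j"
proof (induction j)
  case (Suc j)
  have "(1/2::real)^(j+2) < 1" using half_pow_Suc_le[of "Suc j"] by simp
  then show ?case using Suc by simp
qed simp

lemma tail_factor_ge: "1 \<le> j \<Longrightarrow> 4/3 \<le> tail_factor j"
proof (induction j rule: dec_induct)
  case (step j)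
  have "0 < 1 - (1/2::real)^(j+2)" "1 - (1/2::real)^(j+2) \<le> 1"
    using half_pow_Suc_le[of "Suc j"] by simp_all
  then have "tail_factor j \<le> tail_factor (Suc j)"
    using tail_factor_pos[of j] by (simp add: le_divide_eq)
  then show ?case using step.IH by linarith
qed simp

(* An invariant that bounds the infinite product; it yields
   tail_factor j <= 2. *)
lemma tail_factor_invariant: "tail_factor j * (1/2 + (1/2)^(Suc j)) \<le> 1"
proof (induction j)
  case 0
  then show ?case by simp
next
  case (Suc j)
  define y :: real where "y = (1/2)^(Suc j)"
  have y: "0 < y" "y \<le> 1/2" using half_pow_Suc_le[of j] by (simp_all add: y_def)
  have "tail_factor (Suc j) * (1/2 + (1/2)^(Suc (Suc j))) = tail_factor j * (1/2 + y/2) / (1 - y/2)"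
    by (simp add: y_def field_simps)
  also have "\<dots> \<le> tail_factor j * ((1/2 + y) * (1 - y/2)) / (1 - y/2)"
    using tail_factor_pos[of j] y by (intro divide_right_mono mult_left_mono) (auto simp: algebra_simps)
  also have "\<dots> = tail_factor j * (1/2 + y)" using y by simp
  also have "\<dots> \<le> 1" using Suc by (simp add: y_def)
  finally show ?case .
qed

lemma tail_factor_le_2: "tail_factor j \<le> 2"
proof -
  have "tail_factor j * (1/2) \<le> tail_factor j * (1/2 + (1/2)^(Suc j))"
    using tail_factor_pos[of j] by (intro mult_left_mono) auto
  then show ?thesis using tail_factor_invariant[of j] by simp
qed

lemma PrB_TSO_limit:
  "(\<lambda>m. PrB TSO_model m g) \<longlonglongrightarrow> (1/4)^g * (tail_factor g - tail_factor (Suc g) / 4)"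
proof -
  have "(\<lambda>m. PrB TSO_model m g) \<longlonglongrightarrow>
          (1/2)^g * ((1/2)^g * tail_factor g) - (1/2)^(Suc g) * ((1/2)^(Suc g) * tail_factor (Suc g))"
    unfolding PrB_TSO_eq by (intro tendsto_intros run_tail_limit)
  moreover have "(1/2::real)^g * (1/2)^g = (1/4)^g"
    by (simp add: power_mult_distrib[symmetric])
  ultimately show ?thesis by (simp add: algebra_simps)
qed

definition correction :: "nat \<Rightarrow> real" where
  "correction g = (1/2)^g * (tail_factor g * ((3 - (1/2)^g) / (4 - (1/2)^g)) - 6/7)"

lemma limit_decomposition:
  "(1/4)^g * (tail_factor g - tail_factor (Suc g) / 4) = 6/7 * (1/4)^g + correction g * (1/2)^g"
proof -
  define x :: real where "x = (1/2)^g"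
  have "x \<le> 1" by (simp add: x_def power_le_one)
  then have x: "4 - x \<noteq> 0" "1 - x / 4 \<noteq> 0" by simp_all
  have quarter: "(1/4::real)^g = x * x" by (simp add: x_def power_mult_distrib[symmetric])
  have next_factor: "tail_factor (Suc g) = tail_factor g / (1 - x / 4)"
    by (simp add: x_def)
  have correction: "correction g = x * (tail_factor g * ((3 - x) / (4 - x)) - 6/7)"
    by (simp add: correction_def x_def)
  show ?thesis
    unfolding quarter next_factor correction x_def[symmetric] using x by (simp add: field_simps)
qed

(* 0 <= R(g) <= 2/21 for g >= 1: the factor (3 - x)/(4 - x) with x = 2^-g lies
   in [5/7, 3/4]; the upper bound is checked directly for g = 1, 2 and follows
   from x <= 1/8 otherwise. *)
lemma correction_bounds:
  assumes "1 \<le> g"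
  shows "0 \<le> correction g \<and> correction g \<le> 2/21"
proof -
  define x :: real where "x = (1/2)^g"
  define B where "B = tail_factor g * ((3 - x) / (4 - x)) - 6/7"
  have R: "correction g = x * B" by (simp add: correction_def x_def B_def)
  have x0: "0 < x" by (simp add: x_def)
  have x1: "x \<le> 1/2" using half_pow_Suc_le[of "g - 1"] assms by (simp add: x_def)
  have p: "4/3 \<le> tail_factor g" "tail_factor g \<le> 2"
    using tail_factor_ge[OF assms] tail_factor_le_2 by simp_all
  have f: "0 \<le> (3 - x) / (4 - x)" "5/7 \<le> (3 - x) / (4 - x)" "(3 - x) / (4 - x) \<le> 3/4"
    using x0 x1 by (simp_all add: field_simps)
  have "4/3 * (5/7) \<le> tail_factor g * ((3 - x) / (4 - x))"
    by (rule mult_mono[OF p(1) f(2)]) (use tail_factor_pos[of g] in auto)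
  then have B0: "0 \<le> B" unfolding B_def by linarith
  have "tail_factor g * ((3 - x) / (4 - x)) \<le> 2 * (3/4)"
    by (rule mult_mono[OF p(2) f(3)]) (use f(1) in auto)
  then have B1: "B \<le> 9/14" unfolding B_def by linarith
  have "x * B \<le> 2/21"
  proof (cases "3 \<le> g")
    case True
    have "x \<le> (1/2)^3"
      unfolding x_def by (rule power_decreasing) (use True in auto)
    then have "x \<le> 1/8" by (simp add: power3_eq_cube)
    then have "x * B \<le> 1/8 * (9/14)" using B0 B1 x0 by (intro mult_mono) auto
    then show ?thesis by simp
  next
    case False
    then have "g = 1 \<or> g = 2" using assms by auto
    then show ?thesis by (auto simp: x_def B_def numeral_2_eq_2)
  qed
  then show ?thesis unfolding R using B0 x0 by simp
qed

theorem theorem1: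
  shows "(\<lambda>m. PrB TSO_model m 0) \<longlonglongrightarrow> 2/3
    \<and> (\<forall>\<gamma>::nat. \<gamma> > 0 \<longrightarrow> (\<exists>R::real. 0 \<le> R \<and> R \<le> 2/21 \<and>
         (\<lambda>m. PrB TSO_model m \<gamma>) \<longlonglongrightarrow> 6/7 * (1/4)^\<gamma> + R * (1/2)^\<gamma>))"
proof (intro conjI allI impI)
  show "(\<lambda>m. PrB TSO_model m 0) \<longlonglongrightarrow> 2/3"
    using PrB_TSO_limit[of 0] by simp
next
  fix g :: nat assume "g > 0"
  then have "0 \<le> correction g \<and> correction g \<le> 2/21"
    by (intro correction_bounds) simp
  moreover have "(\<lambda>m. PrB TSO_model m g) \<longlonglongrightarrow> 6/7 * (1/4)^g + correction g * (1/2)^g"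
    using PrB_TSO_limit[of g] unfolding limit_decomposition .
  ultimately show "\<exists>R::real. 0 \<le> R \<and> R \<le> 2/21 \<and>
      (\<lambda>m. PrB TSO_model m g) \<longlonglongrightarrow> 6/7 * (1/4)^g + R * (1/2)^g"
    by blast
qed

end
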